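(* Let $(U,R_1)$ and $(V,R_2)$ be approximation spaces with binary operations $*_1$ on $U$ and $*_2$ on $V$. Equip $U\times V$ with the equivalence relation $R$ given by $(x,y)R(x',y')$ iff $xR_1x'$ and $yR_2y'$, and with the binary operation $(x,y)*(x',y')=(x*_1x',\,y*_2y')$. If $G_1\subseteq U$ and $G_2\subseteq V$ are rough groups, then $G_1\times G_2\subseteq U\times V$ is a rough group in the approximation space $(U\times V,R)$.
   Context: An approximation space is a pair $(U,R)$ with $U$ a set and $R$ an equivalence relation on $U$; for $X\subseteq U$, the upper approximation is $\overline{X}=\bigcup\{[x]_R : [x]_R\cap X\neq\emptyset\}$ and the lower approximation is $\underline{X}=\bigcup\{[x]_R : [x]_R\subseteq X\}$. Given a binary operation (written $xy$) on $U$, a subset $G\subseteq U$ is a rough group if: (1) $xy\in\overline{G}$ for all $x,y\in G$; (2) $(xy)z=x(yz)$ for all $x,y,z\in\overline{G}$; (3) there is $e\in\overline{G}$ with $xe=ex=x$ for all $x\in G$; (4) for every $x\in G$ there is $y\in G$ with $xy=yx=e$. *)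

theory Defs
  imports Main
begin

definition approx_space :: "'a set \<Rightarrow> ('a \<times> 'a) set \<Rightarrow> bool" where
  "approx_space U R \<longleftrightarrow> equiv U R"

definition binop_on :: "'a set \<Rightarrow> ('a \<Rightarrow> 'a \<Rightarrow> 'a) \<Rightarrow> bool" where
  "binop_on U f \<longleftrightarrow> (\<forall>x\<in>U. \<forall>y\<in>U. f x y \<in> U)"

definition upper_approx :: "'a set \<Rightarrow> ('a \<times> 'a) set \<Rightarrow> 'a set \<Rightarrow> 'a set" where
  "upper_approx U R X = \<Union>{R `` {x} | x. x \<in> U \<and> R `` {x} \<inter> X \<noteq> {}}"

definition lower_approx :: "'a set \<Rightarrow> ('a \<times> 'a) set \<Rightarrow> 'a set \<Rightarrow> 'a set" where
  "lower_approx U R X = \<Union>{R `` {x} | x. x \<in> U \<and> R `` {x} \<subseteq> X}"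

definition rough_group ::
  "'a set \<Rightarrow> ('a \<times> 'a) set \<Rightarrow> ('a \<Rightarrow> 'a \<Rightarrow> 'a) \<Rightarrow> 'a set \<Rightarrow> bool" where
  "rough_group U R f G \<longleftrightarrow>
     G \<subseteq> U \<and>
     (\<forall>x\<in>G. \<forall>y\<in>G. f x y \<in> upper_approx U R G) \<and>
     (\<forall>x\<in>upper_approx U R G. \<forall>y\<in>upper_approx U R G. \<forall>z\<in>upper_approx U R G.
        f (f x y) z = f x (f y z)) \<and>
     (\<exists>e\<in>upper_approx U R G.
        (\<forall>x\<in>G. f x e = x \<and> f e x = x) \<and>
        (\<forall>x\<in>G. \<exists>y\<in>G. f x y = e \<and> f y x = e))"

definition prod_rel :: "('a \<times> 'a) set \<Rightarrow> ('b \<times> 'b) set \<Rightarrow> (('a \<times> 'b) \<times> ('a \<times> 'b)) set" where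
  "prod_rel R1 R2 = {((x, y), (x', y')). (x, x') \<in> R1 \<and> (y, y') \<in> R2}"

definition prod_op :: "('a \<Rightarrow> 'a \<Rightarrow> 'a) \<Rightarrow> ('b \<Rightarrow> 'b \<Rightarrow> 'b) \<Rightarrow>
    ('a \<times> 'b) \<Rightarrow> ('a \<times> 'b) \<Rightarrow> ('a \<times> 'b)" where
  "prod_op f1 f2 p q = (f1 (fst p) (fst q), f2 (snd p) (snd q))"

end

theory Submission
  imports Defs
begin

lemma upper_approx_eq:
  "upper_approx U R X = {y. \<exists>x\<in>U. (x, y) \<in> R \<and> (\<exists>g\<in>X. (x, g) \<in> R)}"
  unfolding upper_approx_def by blast

lemma upper_approx_prod_rel:
  "upper_approx (U \<times> V) (prod_rel R1 R2) (G1 \<times> G2) = upper_approx U R1 G1 \<times> upper_approx V R2 G2"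
  unfolding upper_approx_eq prod_rel_def by auto

lemma prod_op_Pair [simp]: "prod_op f1 f2 (a, b) (c, d) = (f1 a c, f2 b d)"
  by (simp add: prod_op_def)

text \<open>Since the upper approximation of a product is the product of the upper approximations,
  every axiom is checked componentwise.\<close>
lemma rough_group_prod:
  assumes G1: "rough_group U R1 f1 G1" and G2: "rough_group V R2 f2 G2"
  shows "rough_group (U \<times> V) (prod_rel R1 R2) (prod_op f1 f2) (G1 \<times> G2)"
proof -
  obtain e1 where e1: "e1 \<in> upper_approx U R1 G1" "\<forall>x\<in>G1. f1 x e1 = x \<and> f1 e1 x = x"
      "\<forall>x\<in>G1. \<exists>y\<in>G1. f1 x y = e1 \<and> f1 y x = e1"
    using G1 unfolding rough_group_def by blast
  obtain e2 where e2: "e2 \<in> upper_approx V R2 G2" "\<forall>x\<in>G2. f2 x e2 = x \<and> f2 e2 x = x"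
      "\<forall>x\<in>G2. \<exists>y\<in>G2. f2 x y = e2 \<and> f2 y x = e2"
    using G2 unfolding rough_group_def by blast
  have inverses: "\<forall>p\<in>G1 \<times> G2. \<exists>q\<in>G1 \<times> G2.
      prod_op f1 f2 p q = (e1, e2) \<and> prod_op f1 f2 q p = (e1, e2)"
    using e1(3) e2(3) by fastforce
  show ?thesis
    using G1 G2 e1(1,2) e2(1,2) inverses
    unfolding rough_group_def upper_approx_prod_rel
    by (intro conjI bexI[of _ "(e1, e2)"]) auto
qed

theorem mainTheorem4:
  fixes U :: "'a set" and R1 :: "('a \<times> 'a) set" and f1 :: "'a \<Rightarrow> 'a \<Rightarrow> 'a"
    and V :: "'b set" and R2 :: "('b \<times> 'b) set" and f2 :: "'b \<Rightarrow> 'b \<Rightarrow> 'b"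
    and G1 :: "'a set" and G2 :: "'b set"
  assumes "approx_space U R1" and "binop_on U f1"
    and "approx_space V R2" and "binop_on V f2"
    and "rough_group U R1 f1 G1" and "rough_group V R2 f2 G2"
  shows "rough_group (U \<times> V) (prod_rel R1 R2) (prod_op f1 f2) (G1 \<times> G2)"
  using assms(5,6) by (rule rough_group_prod)

end
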